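(* For every $\widetilde r\in\mathbb{N}$, every $r_0\in\{0,\dots,b-1\}$ and every $d\in\mathbb{Z}$, \[\mu^{(b\widetilde r+r_0)}(d)=\frac{b-r_0}{b}\,\mu^{(\widetilde r)}(d-r_0)+\frac{r_0}{b}\,\mu^{(\widetilde r+1)}(d+b-r_0).\]
   Context: Fix an integer $b\ge2$. For $n\in\mathbb{N}$ with base-$b$ digits $n_k$, $s(n):=\sum_kn_k$. For $r,n\in\mathbb{N}$, $\Delta^{(r)}(n):=s(n+r)-s(n)$, and for $d\in\mathbb{Z}$, $\mu^{(r)}(d):=\lim_{N\to\infty}\frac1N|\{n<N:\Delta^{(r)}(n)=d\}|$ (these limits exist and define a probability measure on $\mathbb{Z}$; in particular $\mu^{(0)}=\delta_0$). *)

theory Defs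
  imports Complex_Main
begin

fun digit_sum :: "nat \<Rightarrow> nat \<Rightarrow> nat" where
  "digit_sum b n = (if b < 2 \<or> n = 0 then 0 else n mod b + digit_sum b (n div b))"

declare digit_sum.simps [simp del]

definition Delta :: "nat \<Rightarrow> nat \<Rightarrow> nat \<Rightarrow> int" where
  "Delta b r n = int (digit_sum b (n + r)) - int (digit_sum b n)"

definition mu :: "nat \<Rightarrow> nat \<Rightarrow> int \<Rightarrow> real" where
  "mu b r d = lim (\<lambda>N. real (card {n. n < N \<and> Delta b r n = d}) / real N)"

end

theory Submission
  imports Defs
begin

text \<open>Write n = b m + j with j < b, and r = b rt + r0 with r0 < b. If j + r0 < b, adding r
  produces no carry out of the last digit and Delta(r)(n) = Delta(rt)(m) + r0; otherwise exactly
  one carry leaves it and Delta(r)(n) = Delta(rt + 1)(m) + r0 - b. Each block of b consecutive n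
  has b - r0 values of the first kind and r0 of the second, so the identity holds exactly for
  the counts up to multiples of b; since counts grow by at most one per step, densities along
  multiples of b are densities. Because mu is defined by lim, the same identity is also what
  shows, by strong induction on r, that all the limits exist.\<close>

lemma digit_sum_mult_add:
  assumes "b \<ge> 2" "j < b"
  shows "digit_sum b (b * m + j) = digit_sum b m + j"
proof (cases "b * m + j = 0")
  case True
  with assms show ?thesis by (simp add: digit_sum.simps)
next
  case False
  with assms show ?thesis by (subst digit_sum.simps) auto
qed

lemma digit_sum_Suc_le:
  assumes "b \<ge> 2"
  shows "digit_sum b (Suc n) \<le> digit_sum b n + 1"
proof (induction n rule: less_induct)
  case (less n)
  obtain m j where n: "n = b * m + j" and "j < b"
    using assms by (metis mult_div_mod_eq mod_less_divisor not_numeral_le_zero not_gr0)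
  show ?case
  proof (cases "Suc j < b")
    case True
    then show ?thesis
      using digit_sum_mult_add[OF assms, of "Suc j" m] digit_sum_mult_add[OF assms \<open>j < b\<close>, of m]
      by (simp add: n)
  next
    case False
    then have "Suc n = b * Suc m + 0"
      using \<open>j < b\<close> n by simp
    then have "digit_sum b (Suc n) = digit_sum b (Suc m)"
      using assms by (metis digit_sum_mult_add add_0_right not_numeral_le_zero not_gr0)
    also have "\<dots> \<le> digit_sum b m + 1"
    proof (rule less)
      have "m \<le> b * m" and "0 < j"
        using False assms by auto
      then show "m < n"
        using n by linarith
    qed
    also have "\<dots> \<le> digit_sum b n + 1"
      using digit_sum_mult_add[OF assms \<open>j < b\<close>, of m] n by simp
    finally show ?thesis .
  qed
qed

lemma Delta_mult_add_no_carry: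
  assumes "b \<ge> 2" "j + r0 < b"
  shows "Delta b (b * rt + r0) (b * m + j) = Delta b rt m + int r0"
proof -
  have "b * m + j + (b * rt + r0) = b * (m + rt) + (j + r0)"
    by (simp add: algebra_simps)
  then have "digit_sum b (b * m + j + (b * rt + r0)) = digit_sum b (m + rt) + (j + r0)"
    using assms digit_sum_mult_add[of b "j + r0" "m + rt"] by presburger
  then show ?thesis
    using assms digit_sum_mult_add[of b j m] by (simp add: Delta_def)
qed

lemma Delta_mult_add_carry:
  assumes "b \<ge> 2" "j < b" "r0 < b" "b \<le> j + r0"
  shows "Delta b (b * rt + r0) (b * m + j) = Delta b (rt + 1) m + int r0 - int b"
proof -
  have "b * m + j + (b * rt + r0) = b * (m + (rt + 1)) + (j + r0 - b)"
    using assms by (simp add: algebra_simps)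
  then have "digit_sum b (b * m + j + (b * rt + r0)) = digit_sum b (m + (rt + 1)) + (j + r0 - b)"
    using assms digit_sum_mult_add[of b "j + r0 - b" "m + (rt + 1)"] by presburger
  then show ?thesis
    using assms digit_sum_mult_add[of b j m] by (simp add: Delta_def of_nat_diff)
qed

lemma Delta_1_le:
  assumes "b \<ge> 2"
  shows "Delta b 1 n \<le> 1"
  using digit_sum_Suc_le[OF assms, of n] by (simp add: Delta_def)

definition Delta_count :: "nat \<Rightarrow> nat \<Rightarrow> int \<Rightarrow> nat \<Rightarrow> real" where
  "Delta_count b r d N = (\<Sum>n<N. of_bool (Delta b r n = d))"

lemma mu_eq_lim_Delta_count: "mu b r d = lim (\<lambda>N. Delta_count b r d N / real N)"
proof -
  have "{..<N} \<inter> {n. Delta b r n = d} = {n. n < N \<and> Delta b r n = d}" for N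
    by auto
  then show ?thesis
    by (simp add: mu_def Delta_count_def)
qed

lemma mono_Delta_count: "mono (Delta_count b r d)"
  unfolding Delta_count_def by (intro monoI sum_mono2) auto

lemma Delta_count_add_le: "Delta_count b r d (N + k) \<le> Delta_count b r d N + real k"
  by (induction k) (auto simp: Delta_count_def)

lemma Delta_count_0: "Delta_count b 0 d N = of_bool (d = 0) * real N"
  by (simp add: Delta_count_def Delta_def)

lemma Delta_count_block:
  assumes "b \<ge> 2" "r0 < b"
  shows "(\<Sum>j<b. of_bool (Delta b (b * rt + r0) (b * m + j) = d))
       = real (b - r0) * of_bool (Delta b rt m = d - int r0)
         + real r0 * of_bool (Delta b (rt + 1) m = d + int b - int r0)"
proof -
  have split: "{..<b} = {..<b - r0} \<union> {b - r0..<b}"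
    using assms by auto
  have "(\<Sum>j<b. of_bool (Delta b (b * rt + r0) (b * m + j) = d) :: real)
      = (\<Sum>j<b - r0. of_bool (Delta b (b * rt + r0) (b * m + j) = d))
        + (\<Sum>j\<in>{b - r0..<b}. of_bool (Delta b (b * rt + r0) (b * m + j) = d))"
    unfolding split by (rule sum.union_disjoint) auto
  also have "(\<Sum>j<b - r0. of_bool (Delta b (b * rt + r0) (b * m + j) = d) :: real)
      = (\<Sum>j<b - r0. of_bool (Delta b rt m = d - int r0))"
    using assms by (intro sum.cong) (auto simp: Delta_mult_add_no_carry)
  also have "(\<Sum>j\<in>{b - r0..<b}. of_bool (Delta b (b * rt + r0) (b * m + j) = d) :: real)
      = (\<Sum>j\<in>{b - r0..<b}. of_bool (Delta b (rt + 1) m = d + int b - int r0))"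
    using assms by (intro sum.cong) (auto simp: Delta_mult_add_carry)
  finally show ?thesis
    using assms by simp
qed

lemma Delta_count_mult_add:
  assumes "b \<ge> 2" "r0 < b"
  shows "Delta_count b (b * rt + r0) d (b * M)
       = real (b - r0) * Delta_count b rt (d - int r0) M
         + real r0 * Delta_count b (rt + 1) (d + int b - int r0) M"
proof -
  have "Delta_count b (b * rt + r0) d (b * M)
      = (\<Sum>m<M. \<Sum>n\<in>{m * b..<m * b + b}. of_bool (Delta b (b * rt + r0) n = d))"
    unfolding Delta_count_def sum.nat_group by (simp add: mult.commute)
  also have "\<dots> = (\<Sum>m<M. \<Sum>j<b. of_bool (Delta b (b * rt + r0) (b * m + j) = d))"
    by (simp add: sum.atLeastLessThan_shift_0 atLeast0LessThan mult.commute comp_def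
        del: sum_of_bool_eq)
  also have "\<dots> = real (b - r0) * Delta_count b rt (d - int r0) M
         + real r0 * Delta_count b (rt + 1) (d + int b - int r0) M"
    by (simp add: Delta_count_block[OF assms] Delta_count_def sum.distrib sum_distrib_left
        del: sum_of_bool_eq)
  finally show ?thesis .
qed

lemma LIMSEQ_mult_div_over_n:
  assumes "b > 0"
  shows "(\<lambda>N. real (b * (N div b)) / real N) \<longlonglongrightarrow> 1"
proof (rule real_tendsto_sandwich)
  show "\<forall>\<^sub>F N in sequentially. 1 - real b / real N \<le> real (b * (N div b)) / real N"
    using eventually_gt_at_top[of 0]
  proof eventually_elim
    case (elim N)
    have "N \<le> b * (N div b) + b"
      using assms by (metis add_le_mono le_refl less_imp_le_nat mod_less_divisor mult_div_mod_eq)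
    then have "real N - real b \<le> real (b * (N div b))"
      by linarith
    with elim show ?case
      using divide_right_mono[of "real N - real b" _ "real N"] by (simp add: diff_divide_distrib)
  qed
  show "\<forall>\<^sub>F N in sequentially. real (b * (N div b)) / real N \<le> 1"
    by (intro always_eventually allI) (auto simp: divide_le_eq_1 simp flip: of_nat_mult)
  show "(\<lambda>N. 1 - real b / real N) \<longlonglongrightarrow> 1"
    using tendsto_diff[OF tendsto_const lim_const_over_n[of "real b"]] by simp
qed simp

lemma LIMSEQ_over_n_from_multiples:
  fixes g :: "nat \<Rightarrow> real"
  assumes "b > 0" and "mono g" and slow: "\<And>N k. g (N + k) \<le> g N + real k"
    and lim: "(\<lambda>M. g (b * M) / real (b * M)) \<longlonglongrightarrow> L"
  shows "(\<lambda>N. g N / real N) \<longlonglongrightarrow> L"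
proof (rule real_tendsto_sandwich)
  define q where "q N = b * (N div b)" for N
  have N_eq: "N = q N + N mod b" for N
    by (simp add: q_def)
  have g_q: "g (q N) \<le> g N" "g N \<le> g (q N) + real b" for N
  proof -
    show "g (q N) \<le> g N"
      using \<open>mono g\<close> N_eq[of N] by (metis le_add1 monoD)
    have "real (N mod b) \<le> real b"
      using \<open>b > 0\<close> by (simp add: less_imp_le_nat)
    then show "g N \<le> g (q N) + real b"
      using slow[of "q N" "N mod b"] N_eq[of N] by simp
  qed
  have "(\<lambda>N. g (q N) / real (q N) * (real (q N) / real N)) \<longlonglongrightarrow> L * 1"
    unfolding q_def
    by (intro tendsto_mult LIMSEQ_mult_div_over_n \<open>b > 0\<close>
        filterlim_compose[OF lim filterlim_at_top_div_const_nat])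
  moreover have "\<forall>\<^sub>F N in sequentially.
      g (q N) / real (q N) * (real (q N) / real N) = g (q N) / real N"
    using eventually_ge_at_top[of b]
    by eventually_elim (use \<open>b > 0\<close> in \<open>simp add: q_def div_greater_zero_iff\<close>)
  ultimately have lower: "(\<lambda>N. g (q N) / real N) \<longlonglongrightarrow> L"
    by (simp add: Lim_transform_eventually)
  show "\<forall>\<^sub>F N in sequentially. g (q N) / real N \<le> g N / real N"
    using g_q by (simp add: divide_right_mono)
  show "\<forall>\<^sub>F N in sequentially. g N / real N \<le> g (q N) / real N + real b / real N"
    using g_q by (simp add: divide_right_mono flip: add_divide_distrib)
  show "(\<lambda>N. g (q N) / real N) \<longlonglongrightarrow> L"
    by (fact lower)
  show "(\<lambda>N. g (q N) / real N + real b / real N) \<longlonglongrightarrow> L"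
    using tendsto_add[OF lower lim_const_over_n[of "real b"]] by simp
qed

lemma Delta_count_mult_add_tendsto:
  assumes "b \<ge> 2" "r0 < b"
    and lo: "(\<lambda>M. Delta_count b rt (d - int r0) M / real M) \<longlonglongrightarrow> A"
    and hi: "r0 > 0 \<Longrightarrow> (\<lambda>M. Delta_count b (rt + 1) (d + int b - int r0) M / real M) \<longlonglongrightarrow> B"
  shows "(\<lambda>N. Delta_count b (b * rt + r0) d N / real N)
           \<longlonglongrightarrow> real (b - r0) / real b * A + real r0 / real b * B"
proof (rule LIMSEQ_over_n_from_multiples)
  show "b > 0" and "mono (Delta_count b (b * rt + r0) d)"
    using assms(1) mono_Delta_count by auto
  show "Delta_count b (b * rt + r0) d (N + k) \<le> Delta_count b (b * rt + r0) d N + real k" for N k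
    by (rule Delta_count_add_le)
  have "(\<lambda>M. real r0 / real b * (Delta_count b (rt + 1) (d + int b - int r0) M / real M))
          \<longlonglongrightarrow> real r0 / real b * B"
  proof (cases "r0 = 0")
    case False
    then show ?thesis
      by (intro tendsto_mult_left hi) simp
  qed simp
  then have "(\<lambda>M. real (b - r0) / real b * (Delta_count b rt (d - int r0) M / real M)
                + real r0 / real b * (Delta_count b (rt + 1) (d + int b - int r0) M / real M))
          \<longlonglongrightarrow> real (b - r0) / real b * A + real r0 / real b * B"
    by (rule tendsto_add[OF tendsto_mult_left[OF lo]])
  moreover have "\<forall>\<^sub>F M in sequentially.
      real (b - r0) / real b * (Delta_count b rt (d - int r0) M / real M)
        + real r0 / real b * (Delta_count b (rt + 1) (d + int b - int r0) M / real M)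
      = Delta_count b (b * rt + r0) d (b * M) / real (b * M)"
    using eventually_gt_at_top[of 0]
  proof eventually_elim
    case (elim M)
    then show ?case
      unfolding Delta_count_mult_add[OF assms(1,2)] using assms(1) by (simp add: field_simps)
  qed
  ultimately show "(\<lambda>M. Delta_count b (b * rt + r0) d (b * M) / real (b * M))
          \<longlonglongrightarrow> real (b - r0) / real b * A + real r0 / real b * B"
    by (rule Lim_transform_eventually)
qed

lemma convergent_Delta_count_0: "convergent (\<lambda>N. Delta_count b 0 d N / real N)"
proof -
  have "\<forall>\<^sub>F N in sequentially. of_bool (d = 0) = Delta_count b 0 d N / real N"
    using eventually_gt_at_top[of 0] by eventually_elim (simp add: Delta_count_0)
  then show ?thesis
    unfolding convergent_def by (blast intro: Lim_transform_eventually tendsto_const)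
qed

text \<open>For r = 1 the recursion refers to r = 1 itself, at the larger value d + b - 1; since
  Delta(1) \<le> 1, induction on 2 - d terminates.\<close>

lemma convergent_Delta_count_1:
  assumes "b \<ge> 2"
  shows "convergent (\<lambda>N. Delta_count b 1 d N / real N)"
proof (induction "nat (2 - d)" arbitrary: d rule: less_induct)
  case less
  show ?case
  proof (cases "d \<ge> 2")
    case True
    then have "Delta b 1 n \<noteq> d" for n
      using Delta_1_le[OF assms, of n] by simp
    then have "Delta_count b 1 d N = 0" for N
      by (simp add: Delta_count_def)
    then show ?thesis
      by (simp add: convergent_const)
  next
    case False
    obtain B where "(\<lambda>N. Delta_count b (0 + 1) (d + int b - int 1) N / real N) \<longlonglongrightarrow> B"
      using less[of "d + int b - 1"] False assms by (auto simp: convergent_def)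
    moreover obtain A where "(\<lambda>N. Delta_count b 0 (d - int 1) N / real N) \<longlonglongrightarrow> A"
      using convergent_Delta_count_0 by (auto simp: convergent_def)
    ultimately show ?thesis
      using Delta_count_mult_add_tendsto[OF assms, of 1 0 d A B] assms
      unfolding convergent_def by auto
  qed
qed

lemma convergent_Delta_count:
  assumes "b \<ge> 2"
  shows "convergent (\<lambda>N. Delta_count b r d N / real N)"
proof (induction r arbitrary: d rule: less_induct)
  case (less r)
  consider "r = 0" | "r = 1" | "r \<ge> 2"
    by linarith
  then show ?case
  proof cases
    case 3
    define rt r0 where "rt = r div b" and "r0 = r mod b"
    have r: "r = b * rt + r0" and "r0 < b"
      using assms by (simp_all add: rt_def r0_def)
    have "rt < r"
      using 3 assms by (simp add: rt_def)
    moreover have "rt + 1 < r" if "r0 > 0"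
      using 3 assms r that by (cases "rt = 0") (auto intro: less_le_trans[of _ "2 * rt + r0"])
    ultimately obtain A B
      where "(\<lambda>M. Delta_count b rt (d - int r0) M / real M) \<longlonglongrightarrow> A"
        and "r0 > 0 \<Longrightarrow> (\<lambda>M. Delta_count b (rt + 1) (d + int b - int r0) M / real M) \<longlonglongrightarrow> B"
      using less by (metis convergent_LIMSEQ_iff)
    then show ?thesis
      using Delta_count_mult_add_tendsto[OF assms \<open>r0 < b\<close>] unfolding convergent_def r by blast
  qed (use convergent_Delta_count_0 convergent_Delta_count_1[OF assms] in auto)
qed

theorem mainTheorem8:
  fixes b rt r0 :: nat and d :: int
  assumes "b \<ge> 2" and "r0 < b"
  shows "mu b (b * rt + r0) d
       = real (b - r0) / real b * mu b rt (d - int r0)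
         + real r0 / real b * mu b (rt + 1) (d + int b - int r0)"
proof -
  have "(\<lambda>N. Delta_count b r e N / real N) \<longlonglongrightarrow> mu b r e" for r e
    using convergent_Delta_count[OF assms(1)]
    by (simp add: mu_eq_lim_Delta_count convergent_LIMSEQ_iff)
  from Delta_count_mult_add_tendsto[OF assms this this]
  show ?thesis
    unfolding mu_eq_lim_Delta_count[of b "b * rt + r0"] by (rule limI)
qed

end
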